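(* Let $\kappa\neq0$ and let $S=\{(x(s),t,z(s)) : s,t\in\mathbb R\}\subset\mathbb R^3$ be a $\kappa$-cylindrical surface, where $(x,z,\theta)$ solves $x'=\cos\theta$, $z'=\sin\theta$, $\theta'=\kappa z$ on $\mathbb R$. Then $S$ is symmetric with respect to any vertical plane parallel to the rulings (i.e. any plane $\{x=x(s_0)\}$) passing through a point where the height function $z$ attains an extremum (i.e. where $z'(s_0)=0$, equivalently $\cos\theta(s_0)=\pm1$).
   Context: A $\kappa$-cylindrical surface ($\kappa\ne 0$ constant) is a cylindrical ruled surface in $\mathbb R^3$ that locally satisfies the capillary equation $\operatorname{div}\big(Du/\sqrt{1+|Du|^2}\big)=\kappa u$, i.e. its mean curvature equals $\kappa z/2$. Such a surface has horizontal rulings (here parallel to the $y$-axis) and can be written $(x(s),t,z(s))$ where the directrix $\alpha=(x,z)$ is parametrized by arc length, $\theta$ is the angle between $\partial/\partial x$ and $\alpha'$, and $(x,z,\theta)$ satisfies $x'=\cos\theta$, $z'=\sin\theta$, $\theta'=\kappa z$. The height $z$ is measured with respect to the horizontal plane $\Pi=\{z=0\}$. *)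

theory Defs
  imports "HOL-Analysis.Analysis"
begin

definition kappa_cyl_solution ::
  "real \<Rightarrow> (real \<Rightarrow> real) \<Rightarrow> (real \<Rightarrow> real) \<Rightarrow> (real \<Rightarrow> real) \<Rightarrow> bool" where
  "kappa_cyl_solution \<kappa> x z \<theta> \<longleftrightarrow>
     (\<forall>s. (x has_real_derivative cos (\<theta> s)) (at s)) \<and>
     (\<forall>s. (z has_real_derivative sin (\<theta> s)) (at s)) \<and>
     (\<forall>s. (\<theta> has_real_derivative \<kappa> * z s) (at s))"

definition cyl_surface :: "(real \<Rightarrow> real) \<Rightarrow> (real \<Rightarrow> real) \<Rightarrow> (real \<times> real \<times> real) set" where
  "cyl_surface x z = {(x s, t, z s) | s t. True}"

definition reflect_x :: "real \<Rightarrow> real \<times> real \<times> real \<Rightarrow> real \<times> real \<times> real" where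
  "reflect_x a p = (2 * a - fst p, fst (snd p), snd (snd p))"

end

theory Submission
  imports Defs
begin

text \<open>The directrix equations form an autonomous system (x, z, \<theta>)' = F(x, z, \<theta>) whose
  right-hand side F is globally Lipschitz, so by Gronwall's inequality a solution is determined by
  its value at a single parameter s0. If sin \<theta>(s0) = 0, the substitution
  \<theta> \<mapsto> 2\<theta>(s0) - \<theta> preserves cos \<theta> and changes the sign of sin \<theta>, so
  s \<mapsto> (2x(s0) - x(2s0 - s), z(2s0 - s), 2\<theta>(s0) - \<theta>(2s0 - s)) is again a
  solution with the same value at s0. Hence it equals (x, z, \<theta>): the directrix, and with it
  the surface, is symmetric about the vertical line x = x(s0).\<close>

lemma chord_le_arc: "(cos a - cos b)\<^sup>2 + (sin a - sin b)\<^sup>2 \<le> (a - b :: real)\<^sup>2"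
proof -
  have "cos (a - b) = 1 - 2 * (sin ((a - b) / 2))\<^sup>2"
    by (metis cos_double_sin field_sum_of_halves mult_2)
  then have "(cos a - cos b)\<^sup>2 + (sin a - sin b)\<^sup>2 = 4 * (sin ((a - b) / 2))\<^sup>2"
    by (simp add: power2_diff cos_diff algebra_simps)
  also have "\<dots> \<le> 4 * ((a - b) / 2)\<^sup>2"
    using abs_sin_x_le_abs_x abs_le_square_iff by (metis mult_left_mono zero_le_numeral)
  finally show ?thesis by (simp add: power_divide)
qed

lemma has_real_derivative_reflect:
  assumes "(f has_real_derivative f') (at (c - s))"
  shows "((\<lambda>s. f (c - s)) has_real_derivative - f') (at s)"
proof -
  have "((\<lambda>s. c - s) has_real_derivative -1) (at s)"
    by (auto intro!: derivative_eq_intros)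
  from DERIV_chain2[OF assms this] show ?thesis by simp
qed

lemma gronwall_zero:
  fixes E E' :: "real \<Rightarrow> real"
  assumes deriv: "\<And>s. (E has_real_derivative E' s) (at s)"
    and nonneg: "\<And>s. 0 \<le> E s"
    and bound: "\<And>s. \<bar>E' s\<bar> \<le> K * E s"
    and "E s\<^sub>0 = 0"
  shows "E s = 0"
proof -
  have "E s * exp (- K * s) \<le> 0" if "s\<^sub>0 \<le> s"
  proof -
    have "E s * exp (- K * s) \<le> E s\<^sub>0 * exp (- K * s\<^sub>0)"
    proof (rule DERIV_nonpos_imp_nonincreasing[OF that])
      fix t
      have "((\<lambda>s. E s * exp (- K * s)) has_real_derivative (E' t - K * E t) * exp (- K * t)) (at t)"
        by (auto intro!: derivative_eq_intros deriv simp: algebra_simps)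
      moreover have "(E' t - K * E t) * exp (- K * t) \<le> 0"
        using bound[of t] by (intro mult_nonpos_nonneg) auto
      ultimately show "\<exists>y. ((\<lambda>s. E s * exp (- K * s)) has_real_derivative y) (at t) \<and> y \<le> 0"
        by blast
    qed
    with \<open>E s\<^sub>0 = 0\<close> show ?thesis by simp
  qed
  moreover have "E s * exp (K * s) \<le> 0" if "s \<le> s\<^sub>0"
  proof -
    have "E s * exp (K * s) \<le> E s\<^sub>0 * exp (K * s\<^sub>0)"
    proof (rule DERIV_nonneg_imp_nondecreasing[OF that])
      fix t
      have "((\<lambda>s. E s * exp (K * s)) has_real_derivative (E' t + K * E t) * exp (K * t)) (at t)"
        by (auto intro!: derivative_eq_intros deriv simp: algebra_simps)
      moreover have "0 \<le> (E' t + K * E t) * exp (K * t)"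
        using bound[of t] by (intro mult_nonneg_nonneg) auto
      ultimately show "\<exists>y. ((\<lambda>s. E s * exp (K * s)) has_real_derivative y) (at t) \<and> y \<ge> 0"
        by blast
    qed
    with \<open>E s\<^sub>0 = 0\<close> show ?thesis by simp
  qed
  ultimately have "E s \<le> 0"
    by (cases "s\<^sub>0 \<le> s") (auto simp: mult_le_0_iff)
  with nonneg[of s] show ?thesis by simp
qed

lemma lipschitz_ode_unique:
  fixes F :: "'a::real_inner \<Rightarrow> 'a" and u v :: "real \<Rightarrow> 'a"
  assumes lipschitz: "L-lipschitz_on UNIV F"
    and u: "\<And>s. (u has_vector_derivative F (u s)) (at s)"
    and v: "\<And>s. (v has_vector_derivative F (v s)) (at s)"
    and "u s\<^sub>0 = v s\<^sub>0"
  shows "u s = v s"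
proof -
  define E where "E s = (u s - v s) \<bullet> (u s - v s)" for s
  define E' where "E' s = 2 * ((u s - v s) \<bullet> (F (u s) - F (v s)))" for s
  have deriv: "(E has_real_derivative E' s) (at s)" for s
    using u[of s] v[of s]
    unfolding E_def[abs_def] E'_def has_vector_derivative_def has_field_derivative_def
    by (auto intro!: derivative_eq_intros simp: inner_commute algebra_simps)
  have nonneg: "0 \<le> E s" for s
    by (simp add: E_def)
  have bound: "\<bar>E' s\<bar> \<le> 2 * L * E s" for s
  proof -
    have "\<bar>E' s\<bar> \<le> 2 * (norm (u s - v s) * norm (F (u s) - F (v s)))"
      unfolding E'_def by (simp add: abs_mult Cauchy_Schwarz_ineq2)
    also have "\<dots> \<le> 2 * (norm (u s - v s) * (L * norm (u s - v s)))"
      by (intro mult_left_mono lipschitz_on_normD[OF lipschitz]) auto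
    finally show ?thesis
      by (simp add: E_def power2_norm_eq_inner[symmetric] power2_eq_square mult_ac)
  qed
  have "E s\<^sub>0 = 0"
    using \<open>u s\<^sub>0 = v s\<^sub>0\<close> by (simp add: E_def)
  with gronwall_zero[OF deriv nonneg bound] have "E s = 0" .
  then show ?thesis by (simp add: E_def)
qed

definition kappa_cyl_field :: "real \<Rightarrow> real \<times> real \<times> real \<Rightarrow> real \<times> real \<times> real" where
  "kappa_cyl_field \<kappa> = (\<lambda>(x, z, \<theta>). (cos \<theta>, sin \<theta>, \<kappa> * z))"

lemma kappa_cyl_solution_has_vector_derivative:
  assumes "kappa_cyl_solution \<kappa> x z \<theta>"
  shows "((\<lambda>s. (x s, z s, \<theta> s)) has_vector_derivative kappa_cyl_field \<kappa> (x s, z s, \<theta> s)) (at s)"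
  using assms
  by (auto simp: kappa_cyl_solution_def kappa_cyl_field_def has_real_derivative_iff_has_vector_derivative
      intro!: has_vector_derivative_Pair)

lemma lipschitz_kappa_cyl_field: "(1 + \<bar>\<kappa>\<bar>)-lipschitz_on UNIV (kappa_cyl_field \<kappa>)"
proof (rule lipschitz_onI)
  have dist_triple: "(dist (a, b, c) (a', b', c'))\<^sup>2 = (a - a')\<^sup>2 + (b - b')\<^sup>2 + (c - c')\<^sup>2"
    for a b c a' b' c' :: real
    by (simp add: dist_Pair_Pair dist_real_def)
  fix p q :: "real \<times> real \<times> real"
  obtain x z \<theta> x' z' \<theta>' where pq: "p = (x, z, \<theta>)" "q = (x', z', \<theta>')"
    by (cases p, cases q) auto
  have "(dist (kappa_cyl_field \<kappa> p) (kappa_cyl_field \<kappa> q))\<^sup>2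
      = (cos \<theta> - cos \<theta>')\<^sup>2 + (sin \<theta> - sin \<theta>')\<^sup>2 + \<kappa>\<^sup>2 * (z - z')\<^sup>2"
    by (simp add: pq kappa_cyl_field_def dist_triple power_mult_distrib right_diff_distrib[symmetric])
  also have "\<dots> \<le> (\<theta> - \<theta>')\<^sup>2 + \<kappa>\<^sup>2 * (z - z')\<^sup>2"
    using chord_le_arc by simp
  also have "\<dots> \<le> (1 + \<bar>\<kappa>\<bar>)\<^sup>2 * ((x - x')\<^sup>2 + (z - z')\<^sup>2 + (\<theta> - \<theta>')\<^sup>2)"
  proof -
    have "1 \<le> (1 + \<bar>\<kappa>\<bar>)\<^sup>2" "\<kappa>\<^sup>2 \<le> (1 + \<bar>\<kappa>\<bar>)\<^sup>2"
      by (simp_all add: power2_eq_square algebra_simps)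
    from this[THEN mult_right_mono] show ?thesis
      by (smt (verit, best) distrib_left mult_nonneg_nonneg zero_le_power2)
  qed
  also have "\<dots> = ((1 + \<bar>\<kappa>\<bar>) * dist p q)\<^sup>2"
    by (simp add: pq dist_triple power_mult_distrib)
  finally show "dist (kappa_cyl_field \<kappa> p) (kappa_cyl_field \<kappa> q) \<le> (1 + \<bar>\<kappa>\<bar>) * dist p q"
    by (rule power2_le_imp_le) simp
qed simp

lemma kappa_cyl_solution_reflect:
  assumes "kappa_cyl_solution \<kappa> x z \<theta>" and "sin \<phi> = 0"
  shows "kappa_cyl_solution \<kappa> (\<lambda>s. a - x (c - s)) (\<lambda>s. z (c - s)) (\<lambda>s. 2 * \<phi> - \<theta> (c - s))"
proof -
  have "cos (2 * \<phi> - t) = cos t" "sin (2 * \<phi> - t) = - sin t" for t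
    using assms(2) sin_cos_squared_add[of \<phi>] by (simp_all add: cos_diff sin_diff sin_double cos_double)
  with assms(1) show ?thesis
    unfolding kappa_cyl_solution_def
    by (auto intro!: derivative_eq_intros has_real_derivative_reflect)
qed

lemma kappa_cyl_solution_symmetric:
  assumes sol: "kappa_cyl_solution \<kappa> x z \<theta>" and "sin (\<theta> s\<^sub>0) = 0"
  shows "x (2 * s\<^sub>0 - s) = 2 * x s\<^sub>0 - x s" and "z (2 * s\<^sub>0 - s) = z s"
proof -
  let ?x = "\<lambda>s. 2 * x s\<^sub>0 - x (2 * s\<^sub>0 - s)"
  let ?z = "\<lambda>s. z (2 * s\<^sub>0 - s)"
  let ?\<theta> = "\<lambda>s. 2 * \<theta> s\<^sub>0 - \<theta> (2 * s\<^sub>0 - s)"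
  have "kappa_cyl_solution \<kappa> ?x ?z ?\<theta>"
    using kappa_cyl_solution_reflect[OF sol \<open>sin (\<theta> s\<^sub>0) = 0\<close>] .
  have "(x s, z s, \<theta> s) = (?x s, ?z s, ?\<theta> s)"
    by (rule lipschitz_ode_unique[OF lipschitz_kappa_cyl_field,
          OF kappa_cyl_solution_has_vector_derivative[OF sol]
             kappa_cyl_solution_has_vector_derivative[OF \<open>kappa_cyl_solution \<kappa> ?x ?z ?\<theta>\<close>],
          of s\<^sub>0]) simp
  then show "x (2 * s\<^sub>0 - s) = 2 * x s\<^sub>0 - x s" and "z (2 * s\<^sub>0 - s) = z s"
    by auto
qed

lemma reflect_x_cyl_surface:
  assumes "\<And>s. x (c - s) = 2 * a - x s" and "\<And>s. z (c - s) = z s"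
  shows "reflect_x a ` cyl_surface x z = cyl_surface x z"
proof -
  have reflect: "reflect_x a (x s, t, z s) = (x (c - s), t, z (c - s))" for s t
    using assms by (simp add: reflect_x_def)
  show ?thesis
  proof
    show "reflect_x a ` cyl_surface x z \<subseteq> cyl_surface x z"
      by (auto simp: cyl_surface_def reflect)
    show "cyl_surface x z \<subseteq> reflect_x a ` cyl_surface x z"
    proof
      fix p assume "p \<in> cyl_surface x z"
      then obtain s t where "p = (x s, t, z s)"
        by (auto simp: cyl_surface_def)
      then have "p = reflect_x a (x (c - s), t, z (c - s))"
        by (simp add: reflect)
      then show "p \<in> reflect_x a ` cyl_surface x z"
        by (auto simp: cyl_surface_def)
    qed
  qed
qed

theorem mainTheorem2:
  fixes \<kappa> :: real and x z \<theta> :: "real \<Rightarrow> real" and s\<^sub>0 :: real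
  assumes "\<kappa> \<noteq> 0"
    and "kappa_cyl_solution \<kappa> x z \<theta>"
    and "deriv z s\<^sub>0 = 0"
  shows "reflect_x (x s\<^sub>0) ` cyl_surface x z = cyl_surface x z"
proof -
  have "deriv z s\<^sub>0 = sin (\<theta> s\<^sub>0)"
    using assms(2) by (intro DERIV_imp_deriv) (simp add: kappa_cyl_solution_def)
  with assms(3) have "sin (\<theta> s\<^sub>0) = 0" by simp
  with assms(2) show ?thesis
    by (intro reflect_x_cyl_surface[where c = "2 * s\<^sub>0"] kappa_cyl_solution_symmetric)
qed

end
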